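(* Let $\mathbb{M}$ be a partial group. Then (i) $N(\mathbb{M})$ is a subgroup of $\mathbb{M}$; (ii) $Z(\mathbb{M})$ is an abelian subgroup of $\mathbb{M}$; and (iii) $\mathrm{Inn}(\mathbb{M})\cong N(\mathbb{M})/Z(\mathbb{M})$.
   Context: Partial groups are regarded as simplicial sets whose $n$-simplices are the words $[x_1|\dots|x_n]$ in the domain of the partial product (faces multiply adjacent letters or delete the first/last letter; degeneracies insert the unit); $\Pi[x_1|\dots|x_n]=[x_1\cdots x_n]$. A subgroup of $\mathbb{M}$ is a subset $H\subseteq\mathbb{M}_1$ such that every word in $H$ is a simplex, closed under products and inverses. For $\eta,x\in\mathbb{M}_1$ write ${}^{\eta}x=\eta x\eta^{-1}$ when $[\eta|x|\eta^{-1}]$ is a simplex. $N(\mathbb{M})$ is the set of $\eta\in\mathbb{M}_1$ such that (i) for every $x\in\mathbb{M}_1$, $[\eta|x|\eta^{-1}]\in\mathbb{M}$ and $x\mapsto{}^{\eta}x$ extends to an automorphism of $\mathbb{M}$; (ii) for every simplex $[x_1|\dots|x_n]$ and $0\le i\le n$, $\omega_i=[{}^{\eta}x_1|\dots|{}^{\eta}x_i|\eta|x_{i+1}|\dots|x_n]$ is a simplex and $\Pi(\omega_0)=\dots=\Pi(\omega_n)$. $Z(\mathbb{M})$ is the set of $\eta\in N(\mathbb{M})$ with ${}^{\eta}x=x$ for all $x\in\mathbb{M}_1$. An automorphism $\alpha$ of $\mathbb{M}$ (simplicial automorphism) is inner if there is a simplicial homotopy $F\colon\mathbb{M}\times\Delta[1]\to\mathbb{M}$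 from $\alpha$ to $\mathrm{Id}_{\mathbb{M}}$; $\mathrm{Inn}(\mathbb{M})$ is the group of inner automorphisms. *)

theory Defs
  imports "HOL-Algebra.Coset"
begin

record 'a partial_group =
  pg_carrier :: "'a set"
  pg_dom     :: "'a list set"
  pg_prod    :: "'a list \<Rightarrow> 'a"
  pg_inv     :: "'a \<Rightarrow> 'a"

definition pg_one :: "'a partial_group \<Rightarrow> 'a" where
  "pg_one M = pg_prod M []"

definition partial_group :: "'a partial_group \<Rightarrow> bool" where
  "partial_group M \<longleftrightarrow>
     pg_dom M \<subseteq> lists (pg_carrier M) \<and>
     [] \<in> pg_dom M \<and>
     (\<forall>x\<in>pg_carrier M. [x] \<in> pg_dom M) \<and>
     (\<forall>u v. u @ v \<in> pg_dom M \<longrightarrow> u \<in> pg_dom M \<and> v \<in> pg_dom M) \<and>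
     (\<forall>w\<in>pg_dom M. pg_prod M w \<in> pg_carrier M) \<and>
     (\<forall>x\<in>pg_carrier M. pg_prod M [x] = x) \<and>
     (\<forall>u v w. u @ v @ w \<in> pg_dom M \<longrightarrow>
        u @ [pg_prod M v] @ w \<in> pg_dom M \<and>
        pg_prod M (u @ v @ w) = pg_prod M (u @ [pg_prod M v] @ w)) \<and>
     (\<forall>x\<in>pg_carrier M. pg_inv M x \<in> pg_carrier M \<and> pg_inv M (pg_inv M x) = x) \<and>
     (\<forall>w\<in>pg_dom M. rev (map (pg_inv M) w) @ w \<in> pg_dom M \<and>
        pg_prod M (rev (map (pg_inv M) w) @ w) = pg_one M)"

definition simp :: "'a partial_group \<Rightarrow> nat \<Rightarrow> 'a list set" where
  "simp M n = {w \<in> pg_dom M. length w = n}"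

definition face :: "'a partial_group \<Rightarrow> nat \<Rightarrow> nat \<Rightarrow> 'a list \<Rightarrow> 'a list" where
  "face M n i w =
     (if i = 0 then tl w
      else if i = n then butlast w
      else take (i - 1) w @ [pg_prod M [w ! (i - 1), w ! i]] @ drop (i + 1) w)"

definition degen :: "'a partial_group \<Rightarrow> nat \<Rightarrow> nat \<Rightarrow> 'a list \<Rightarrow> 'a list" where
  "degen M n i w = take i w @ [pg_one M] @ drop i w"

definition simplicial_map :: "'a partial_group \<Rightarrow> (nat \<Rightarrow> 'a list \<Rightarrow> 'a list) \<Rightarrow> bool" where
  "simplicial_map M f \<longleftrightarrow>
     (\<forall>n. \<forall>w\<in>simp M n. f n w \<in> simp M n) \<and>
     (\<forall>n. \<forall>w\<in>simp M n. \<forall>i\<le>n. 0 < n \<longrightarrow>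
        f (n - 1) (face M n i w) = face M n i (f n w)) \<and>
     (\<forall>n. \<forall>w\<in>simp M n. \<forall>i\<le>n.
        f (Suc n) (degen M n i w) = degen M n i (f n w))"

definition simplicial_aut :: "'a partial_group \<Rightarrow> (nat \<Rightarrow> 'a list \<Rightarrow> 'a list) \<Rightarrow> bool" where
  "simplicial_aut M f \<longleftrightarrow> simplicial_map M f \<and>
     (\<exists>g. simplicial_map M g \<and>
        (\<forall>n. \<forall>w\<in>simp M n. g n (f n w) = w \<and> f n (g n w) = w))"

text \<open>The standard 1-simplex Delta[1]: an n-simplex is a monotone map [n] \<rightarrow> [1],
  encoded by the number k \<le> n+1 of vertices sent to 0.
  The constant map to 0 is k = n+1, the constant map to 1 is k = 0.\<close>
definition d1_face :: "nat \<Rightarrow> nat \<Rightarrow> nat" where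
  "d1_face i k = (if i < k then k - 1 else k)"

definition d1_degen :: "nat \<Rightarrow> nat \<Rightarrow> nat" where
  "d1_degen i k = (if i < k then k + 1 else k)"

text \<open>Simplicial homotopy F : M \<times> Delta[1] \<rightarrow> M from f (restriction to vertex 0)
  to g (restriction to vertex 1).\<close>
definition simplicial_homotopy ::
  "'a partial_group \<Rightarrow> (nat \<Rightarrow> 'a list \<Rightarrow> nat \<Rightarrow> 'a list)
     \<Rightarrow> (nat \<Rightarrow> 'a list \<Rightarrow> 'a list) \<Rightarrow> (nat \<Rightarrow> 'a list \<Rightarrow> 'a list) \<Rightarrow> bool" where
  "simplicial_homotopy M F f g \<longleftrightarrow>
     (\<forall>n. \<forall>w\<in>simp M n. \<forall>k\<le>Suc n. F n w k \<in> simp M n) \<and>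
     (\<forall>n. \<forall>w\<in>simp M n. \<forall>k\<le>Suc n. \<forall>i\<le>n. 0 < n \<longrightarrow>
        F (n - 1) (face M n i w) (d1_face i k) = face M n i (F n w k)) \<and>
     (\<forall>n. \<forall>w\<in>simp M n. \<forall>k\<le>Suc n. \<forall>i\<le>n.
        F (Suc n) (degen M n i w) (d1_degen i k) = degen M n i (F n w k)) \<and>
     (\<forall>n. \<forall>w\<in>simp M n. F n w (Suc n) = f n w \<and> F n w 0 = g n w)"

definition inner_aut :: "'a partial_group \<Rightarrow> (nat \<Rightarrow> 'a list \<Rightarrow> 'a list) \<Rightarrow> bool" where
  "inner_aut M f \<longleftrightarrow> simplicial_aut M f \<and>
     (\<exists>F. simplicial_homotopy M F f (\<lambda>n w. w))"

text \<open>Inn(M) as a group under composition; automorphisms are normalised to be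
  undefined off the simplices so that equality is equality of simplicial maps.\<close>
definition Inn :: "'a partial_group \<Rightarrow> (nat \<Rightarrow> 'a list \<Rightarrow> 'a list) monoid" where
  "Inn M = \<lparr> carrier = {f. inner_aut M f \<and> (\<forall>n w. w \<notin> simp M n \<longrightarrow> f n w = undefined)},
             mult = (\<lambda>f g. \<lambda>n w. if w \<in> simp M n then f n (g n w) else undefined),
             one = (\<lambda>n w. if w \<in> simp M n then w else undefined) \<rparr>"

definition pg_subgroup :: "'a partial_group \<Rightarrow> 'a set \<Rightarrow> bool" where
  "pg_subgroup M H \<longleftrightarrow> H \<subseteq> pg_carrier M \<and>
     lists H \<subseteq> pg_dom M \<and>
     (\<forall>w\<in>lists H. pg_prod M w \<in> H) \<and>
     (\<forall>x\<in>H. pg_inv M x \<in> H)"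

definition pg_conj :: "'a partial_group \<Rightarrow> 'a \<Rightarrow> 'a \<Rightarrow> 'a" where
  "pg_conj M \<eta> x = pg_prod M [\<eta>, x, pg_inv M \<eta>]"

definition pg_N :: "'a partial_group \<Rightarrow> 'a set" where
  "pg_N M = {\<eta> \<in> pg_carrier M.
     (\<forall>x\<in>pg_carrier M. [\<eta>, x, pg_inv M \<eta>] \<in> pg_dom M) \<and>
     (\<exists>f. simplicial_aut M f \<and> (\<forall>x\<in>pg_carrier M. f 1 [x] = [pg_conj M \<eta> x])) \<and>
     (\<forall>w\<in>pg_dom M. \<forall>i\<le>length w.
        map (pg_conj M \<eta>) (take i w) @ [\<eta>] @ drop i w \<in> pg_dom M \<and>
        pg_prod M (map (pg_conj M \<eta>) (take i w) @ [\<eta>] @ drop i w) = pg_prod M (\<eta> # w))}"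

definition pg_Z :: "'a partial_group \<Rightarrow> 'a set" where
  "pg_Z M = {\<eta> \<in> pg_N M. \<forall>x\<in>pg_carrier M. pg_conj M \<eta> x = x}"

definition N_group :: "'a partial_group \<Rightarrow> 'a monoid" where
  "N_group M = \<lparr> carrier = pg_N M, mult = (\<lambda>x y. pg_prod M [x, y]), one = pg_one M \<rparr>"

end

theory Submission
  imports Defs
begin

text \<open>A simplicial map \<open>M \<rightarrow> M\<close> is determined by its action on letters, because the outer faces
  of a word are its shorter subwords; in the same way a homotopy \<open>M \<times> \<Delta>[1] \<rightarrow> M\<close> is determined
  by its values on edges. For \<open>\<eta> \<in> N(M)\<close> the words \<open>\<omega>\<^sub>i\<close>, with \<open>\<eta>\<close> multiplied into its
  neighbour, form a homotopy from conjugation \<open>c\<^sub>\<eta>\<close> to the identity, so \<open>c\<^sub>\<eta>\<close> is inner.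
  Conversely, a homotopy \<open>F\<close> from \<open>\<alpha>\<close> to the identity evaluated on the degenerate simplices
  \<open>s\<^sub>i w\<close> yields exactly the words \<open>\<omega>\<^sub>i\<close> for \<open>\<eta> = F([\<one>])\<close>, and comparing the inner faces of
  neighbouring ones shows that their products agree; hence \<open>\<eta> \<in> N(M)\<close> and \<open>\<alpha> = c\<^sub>\<eta>\<close>.
  The same recognition principle shows that \<open>N(M)\<close> is closed under products and inverses, so
  \<open>\<eta> \<mapsto> c\<^sub>\<eta>\<close> is a surjective homomorphism \<open>N(M) \<rightarrow> Inn(M)\<close> with kernel \<open>Z(M)\<close>.\<close>

locale pgroup =
  fixes M :: "'a partial_group"
  assumes partial_group: "partial_group M"
begin

abbreviation "D \<equiv> pg_dom M"
abbreviation "C \<equiv> pg_carrier M"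
abbreviation "P \<equiv> pg_prod M"
abbreviation "I \<equiv> pg_inv M"
abbreviation "e \<equiv> pg_one M"

definition inv_word :: "'a list \<Rightarrow> 'a list" where
  "inv_word w = rev (map I w)"

lemma
  shows dom_in_carrier: "w \<in> D \<Longrightarrow> set w \<subseteq> C"
    and Nil_in_dom [simp]: "[] \<in> D"
    and singleton_in_dom: "x \<in> C \<Longrightarrow> [x] \<in> D"
    and dom_appendD1: "u @ v \<in> D \<Longrightarrow> u \<in> D"
    and dom_appendD2: "u @ v \<in> D \<Longrightarrow> v \<in> D"
    and prod_in_carrier: "w \<in> D \<Longrightarrow> P w \<in> C"
    and prod_singleton: "x \<in> C \<Longrightarrow> P [x] = x"
    and dom_collapse: "u @ v @ w \<in> D \<Longrightarrow> u @ [P v] @ w \<in> D"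
    and prod_collapse: "u @ v @ w \<in> D \<Longrightarrow> P (u @ v @ w) = P (u @ [P v] @ w)"
    and inv_in_carrier: "x \<in> C \<Longrightarrow> I x \<in> C"
    and inv_inv [simp]: "x \<in> C \<Longrightarrow> I (I x) = x"
    and dom_inv_word_append: "w \<in> D \<Longrightarrow> inv_word w @ w \<in> D"
    and prod_inv_word_append: "w \<in> D \<Longrightarrow> P (inv_word w @ w) = e"
  using partial_group unfolding partial_group_def inv_word_def lists_eq_set by blast+

lemma one_in_carrier: "e \<in> C"
  using prod_in_carrier[OF Nil_in_dom] by (simp add: pg_one_def)

lemma dom_middle: "u @ v @ w \<in> D \<Longrightarrow> v \<in> D"
  using dom_appendD1 dom_appendD2 by blast

lemma inv_word_in_dom: "w \<in> D \<Longrightarrow> inv_word w \<in> D"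
  using dom_inv_word_append dom_appendD1 by blast

lemma inv_word_simps [simp]:
  "inv_word [] = []" "inv_word (x # w) = inv_word w @ [I x]"
  "inv_word (u @ v) = inv_word v @ inv_word u" "length (inv_word w) = length w"
  unfolding inv_word_def by auto

lemma inv_word_inv_word: "set w \<subseteq> C \<Longrightarrow> inv_word (inv_word w) = w"
  by (induction w) auto

lemma set_inv_word_subset: "set w \<subseteq> C \<Longrightarrow> set (inv_word w) \<subseteq> C"
  unfolding inv_word_def using inv_in_carrier by auto

lemma map_eq_on_dom: "(\<And>x. x \<in> C \<Longrightarrow> a x = b x) \<Longrightarrow> w \<in> D \<Longrightarrow> map a w = map b w"
  using dom_in_carrier by (metis map_eq_conv subsetD)

lemma insert_one: "u @ w \<in> D \<Longrightarrow> u @ [e] @ w \<in> D \<and> P (u @ [e] @ w) = P (u @ w)"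
  using dom_collapse[of u "[]" w] prod_collapse[of u "[]" w] by (simp add: pg_one_def)

lemma one_left: "x \<in> C \<Longrightarrow> [e, x] \<in> D \<and> P [e, x] = x"
  using insert_one[of "[]" "[x]"] singleton_in_dom prod_singleton by simp

lemma one_right: "x \<in> C \<Longrightarrow> [x, e] \<in> D \<and> P [x, e] = x"
  using insert_one[of "[x]" "[]"] singleton_in_dom prod_singleton by simp

lemma inv_left: "x \<in> C \<Longrightarrow> [I x, x] \<in> D \<and> P [I x, x] = e"
  using dom_inv_word_append[OF singleton_in_dom] prod_inv_word_append[OF singleton_in_dom] by simp

lemma inv_right: "x \<in> C \<Longrightarrow> [x, I x] \<in> D \<and> P [x, I x] = e"
  using inv_left[OF inv_in_carrier] by simp

lemma prod_Cons: "x # w \<in> D \<Longrightarrow> [x, P w] \<in> D \<and> P (x # w) = P [x, P w]"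
  using dom_collapse[of "[x]" w "[]"] prod_collapse[of "[x]" w "[]"] by simp

lemma prod_assoc3:
  assumes "[a, b, c] \<in> D"
  shows "[P [a, b], c] \<in> D" "[a, P [b, c]] \<in> D"
    and "P [P [a, b], c] = P [a, b, c]" "P [a, P [b, c]] = P [a, b, c]"
  using assms dom_collapse[of "[]" "[a, b]" "[c]"] prod_collapse[of "[]" "[a, b]" "[c]"]
    dom_collapse[of "[a]" "[b, c]" "[]"] prod_collapse[of "[a]" "[b, c]" "[]"] by simp_all

lemma pair_in_carrier: "[a, b] \<in> D \<Longrightarrow> a \<in> C \<and> b \<in> C"
  using dom_in_carrier[of "[a, b]"] by auto

lemma inv_unique:
  assumes ab: "[a, b] \<in> D" and prod: "P [a, b] = e"
  shows "b = I a"
proof -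
  have a: "a \<in> C" and b: "b \<in> C" using pair_in_carrier[OF ab] by auto
  have "[I b] @ [I a, a, b] \<in> D" using dom_inv_word_append[OF ab] by simp
  then have aab: "[I a, a, b] \<in> D" by (rule dom_appendD2)
  have "b = P [e, b]" using one_left[OF b] by simp
  also have "\<dots> = P [P [I a, a], b]" using inv_left[OF a] by simp
  also have "\<dots> = P [I a, P [a, b]]" using prod_assoc3[OF aab] by simp
  also have "\<dots> = P [I a, e]" using prod by simp
  also have "\<dots> = I a" using one_right[OF inv_in_carrier[OF a]] by simp
  finally show ?thesis .
qed

lemma prod_inv_word:
  assumes w: "w \<in> D"
  shows "P (inv_word w) = I (P w)"
proof -
  have "P (inv_word w) # w \<in> D" "P (inv_word w @ w) = P (P (inv_word w) # w)"
    using dom_collapse[of "[]" "inv_word w" w] prod_collapse[of "[]" "inv_word w" w]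
      dom_inv_word_append[OF w] by simp_all
  then have "[P (inv_word w), P w] \<in> D" "P [P (inv_word w), P w] = e"
    using prod_Cons[of "P (inv_word w)" w] prod_inv_word_append[OF w] by simp_all
  then have "P w = I (P (inv_word w))" by (rule inv_unique)
  then show ?thesis using prod_in_carrier[OF inv_word_in_dom[OF w]] by simp
qed

lemma simplexD: "w \<in> simp M n \<Longrightarrow> w \<in> D \<and> length w = n"
  unfolding simp_def by auto

lemma simplexI: "w \<in> D \<Longrightarrow> length w = n \<Longrightarrow> w \<in> simp M n"
  unfolding simp_def by auto

lemma simp_0_iff: "w \<in> simp M 0 \<longleftrightarrow> w = []"
  unfolding simp_def by auto

lemma simp_1D: "w \<in> simp M (Suc 0) \<Longrightarrow> w = [hd w] \<and> hd w \<in> C"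
  unfolding simp_def by (auto simp: length_Suc_conv dest!: dom_in_carrier)

lemma singleton_in_simp_1: "x \<in> C \<Longrightarrow> [x] \<in> simp M (Suc 0)"
  using singleton_in_dom by (auto intro: simplexI)

lemma simplex_nth_in_carrier: "w \<in> simp M n \<Longrightarrow> j < n \<Longrightarrow> w ! j \<in> C"
  using simplexD dom_in_carrier nth_mem by blast

lemma split_at_adjacent:
  "Suc j < length w \<Longrightarrow> w = take j w @ [w ! j, w ! Suc j] @ drop (Suc (Suc j)) w"
  by (simp add: Cons_nth_drop_Suc)

lemma adjacent_pair_in_dom: "w \<in> simp M n \<Longrightarrow> 0 < i \<Longrightarrow> i < n \<Longrightarrow> [w ! (i - 1), w ! i] \<in> D"
  using split_at_adjacent[of "i - 1" w] dom_middle simplexD by (metis Suc_pred')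

lemma face_inner:
  "0 < i \<Longrightarrow> i < n \<Longrightarrow>
   face M n i w = take (i - 1) w @ [P [w ! (i - 1), w ! Suc (i - 1)]] @ drop (Suc (Suc (i - 1))) w"
  unfolding face_def by simp

lemma length_face: "length w = n \<Longrightarrow> 0 < n \<Longrightarrow> i \<le> n \<Longrightarrow> length (face M n i w) = n - 1"
  unfolding face_def by auto

lemma nth_face:
  "length w = n \<Longrightarrow> 0 < n \<Longrightarrow> i \<le> n \<Longrightarrow> j < n - 1 \<Longrightarrow>
   face M n i w ! j = (if i = 0 then w ! Suc j else if i = n then w ! j
     else if j < i - 1 then w ! j else if j = i - 1 then P [w ! (i - 1), w ! i] else w ! Suc j)"
  unfolding face_def by (auto simp: nth_append nth_tl nth_butlast min_def)

lemma face_in_simp: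
  assumes w: "w \<in> simp M n" and n: "0 < n" and i: "i \<le> n"
  shows "face M n i w \<in> simp M (n - 1)"
proof -
  have wD: "w \<in> D" and lw: "length w = n" using simplexD[OF w] by auto
  consider "i = 0" | "i = n" | "0 < i" "i < n" using i by linarith
  then have "face M n i w \<in> D"
  proof cases
    case 1
    have "[hd w] @ tl w \<in> D" using wD lw n by (cases w) auto
    then have "tl w \<in> D" by (rule dom_appendD2)
    then show ?thesis using 1 by (simp add: face_def)
  next
    case 2
    have "butlast w @ [last w] \<in> D" using wD lw n by (cases w rule: rev_cases) auto
    then have "butlast w \<in> D" by (rule dom_appendD1)
    then show ?thesis using 2 n by (simp add: face_def)
  next
    case 3
    then show ?thesis
      using dom_collapse split_at_adjacent[of "i - 1" w] wD lw face_inner by (metis Suc_pred')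
  qed
  then show ?thesis using length_face[OF lw n i] by (rule simplexI)
qed

lemma prod_face_inner:
  assumes w: "w \<in> simp M n" and i: "0 < i" "i < n"
  shows "P (face M n i w) = P w"
  using prod_collapse split_at_adjacent[of "i - 1" w] simplexD[OF w] face_inner[OF i] i
  by (metis Suc_pred')

lemma length_degen: "length w = n \<Longrightarrow> i \<le> n \<Longrightarrow> length (degen M n i w) = Suc n"
  unfolding degen_def by auto

lemma nth_degen:
  "length w = n \<Longrightarrow> i \<le> n \<Longrightarrow> j < Suc n \<Longrightarrow>
   degen M n i w ! j = (if j < i then w ! j else if j = i then e else w ! (j - 1))"
  unfolding degen_def by (auto simp: nth_append min_def)

lemma degen_in_simp: "w \<in> simp M n \<Longrightarrow> i \<le> n \<Longrightarrow> degen M n i w \<in> simp M (Suc n)"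
  using insert_one[of "take i w" "drop i w"] simplexD[of w n]
  unfolding degen_def by (auto intro: simplexI)

lemma face_degen_id:
  assumes w: "w \<in> simp M n" and i: "i \<le> n" and j: "j = i \<or> j = Suc i"
  shows "face M (Suc n) j (degen M n i w) = w"
proof (rule nth_equalityI)
  have lw: "length w = n" using simplexD[OF w] by auto
  have ld: "length (degen M n i w) = Suc n" using length_degen[OF lw i] .
  have jn: "j \<le> Suc n" using i j by auto
  show "length (face M (Suc n) j (degen M n i w)) = length w" using length_face[OF ld _ jn] lw by simp
  fix m assume "m < length (face M (Suc n) j (degen M n i w))"
  hence m: "m < n" using length_face[OF ld _ jn] by simp
  have "i \<noteq> 0 \<Longrightarrow> P [w ! (i - 1), e] = w ! (i - 1)"
    using one_right simplex_nth_in_carrier[OF w, of "i - 1"] i by simp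
  moreover have "i \<noteq> n \<Longrightarrow> P [e, w ! i] = w ! i"
    using one_left simplex_nth_in_carrier[OF w, of i] i by simp
  ultimately show "face M (Suc n) j (degen M n i w) ! m = w ! m"
    using nth_face[OF ld _ jn, of m] nth_degen[OF lw i] m j i by auto
qed

section \<open>Simplicial maps and homotopies are determined by letters\<close>

definition letter_map :: "(nat \<Rightarrow> 'a list \<Rightarrow> 'a list) \<Rightarrow> 'a \<Rightarrow> 'a" where
  "letter_map f x = hd (f (Suc 0) [x])"

lemma simplicial_map_simp: "simplicial_map M f \<Longrightarrow> w \<in> simp M n \<Longrightarrow> f n w \<in> simp M n"
  unfolding simplicial_map_def by blast

lemma simplicial_map_face:
  "simplicial_map M f \<Longrightarrow> w \<in> simp M n \<Longrightarrow> i \<le> n \<Longrightarrow> 0 < n \<Longrightarrow>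
   f (n - 1) (face M n i w) = face M n i (f n w)"
  unfolding simplicial_map_def by blast

lemma simplicial_map_degen:
  "simplicial_map M f \<Longrightarrow> w \<in> simp M n \<Longrightarrow> i \<le> n \<Longrightarrow>
   f (Suc n) (degen M n i w) = degen M n i (f n w)"
  unfolding simplicial_map_def by blast

lemma simplicial_map_singleton:
  "simplicial_map M f \<Longrightarrow> x \<in> C \<Longrightarrow> f (Suc 0) [x] = [letter_map f x] \<and> letter_map f x \<in> C"
  using simp_1D[OF simplicial_map_simp[OF _ singleton_in_simp_1]] unfolding letter_map_def by metis

lemma letter_map_in_carrier: "simplicial_map M f \<Longrightarrow> x \<in> C \<Longrightarrow> letter_map f x \<in> C"
  using simplicial_map_singleton by blast

lemma simplicial_map_spine:
  assumes f: "simplicial_map M f"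
  shows "w \<in> simp M n \<Longrightarrow> f n w = map (letter_map f) w"
proof (induction n arbitrary: w rule: less_induct)
  case (less n)
  have lw: "length w = n" using simplexD[OF less.prems] by auto
  have lv: "length (f n w) = n" using simplexD[OF simplicial_map_simp[OF f less.prems]] by auto
  consider "n = 0" | "n = Suc 0" | m where "n = Suc (Suc m)" by (cases n; cases "n - 1") auto
  then show ?case
  proof cases
    case 1
    then show ?thesis using lw lv by simp
  next
    case 2
    obtain x where x: "w = [x]" "x \<in> C" using simp_1D less.prems 2 by metis
    then show ?thesis using 2 simplicial_map_singleton[OF f x(2)] by simp
  next
    case (3 m)
    then have n: "0 < n" by simp
    have IH: "\<And>u. u \<in> simp M (n - 1) \<Longrightarrow> f (n - 1) u = map (letter_map f) u"
      using less.IH n by simp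
    have tl: "tl (f n w) = map (letter_map f) (tl w)"
      using simplicial_map_face[OF f less.prems _ n, of 0] IH[OF face_in_simp[OF less.prems n, of 0]]
      by (simp add: face_def)
    have butlast: "butlast (f n w) = map (letter_map f) (butlast w)"
      using simplicial_map_face[OF f less.prems _ n, of n] IH[OF face_in_simp[OF less.prems n, of n]] n
      by (simp add: face_def)
    show ?thesis
    proof (rule nth_equalityI)
      show "length (f n w) = length (map (letter_map f) w)" using lv lw by simp
      fix j assume j: "j < length (f n w)"
      show "f n w ! j = map (letter_map f) w ! j"
      proof (cases j)
        case 0
        then show ?thesis using arg_cong[OF butlast, of "\<lambda>u. u ! 0"] lv lw 3 by (simp add: nth_butlast)
      next
        case (Suc j')
        then show ?thesis using arg_cong[OF tl, of "\<lambda>u. u ! j'"] j lv lw by (simp add: nth_tl)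
      qed
    qed
  qed
qed

lemma map_letter_map_in_dom: "simplicial_map M f \<Longrightarrow> w \<in> D \<Longrightarrow> map (letter_map f) w \<in> D"
  using simplicial_map_simp simplicial_map_spine simplexD simplexI by metis

lemma letter_map_one:
  assumes f: "simplicial_map M f"
  shows "letter_map f e = e"
proof -
  have "f 0 [] = []" using simplicial_map_simp[OF f, of "[]" 0] simp_0_iff by simp
  then have "f (Suc 0) [e] = [e]"
    using simplicial_map_degen[OF f, of "[]" 0 0] simp_0_iff by (simp add: degen_def)
  then show ?thesis unfolding letter_map_def by simp
qed

lemma letter_map_mult:
  assumes f: "simplicial_map M f" and ab: "[a, b] \<in> D"
  shows "[letter_map f a, letter_map f b] \<in> D \<and> letter_map f (P [a, b]) = P [letter_map f a, letter_map f b]"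
proof -
  have w: "[a, b] \<in> simp M 2" using ab by (auto intro: simplexI)
  have spine: "f 2 [a, b] = [letter_map f a, letter_map f b]" using simplicial_map_spine[OF f w] by simp
  have "f (Suc 0) [P [a, b]] = [P [letter_map f a, letter_map f b]]"
    using simplicial_map_face[OF f w, of 1] spine by (simp add: face_def)
  then show ?thesis using simplexD[OF simplicial_map_simp[OF f w]] spine by (simp add: letter_map_def)
qed

lemma letter_map_inv:
  assumes f: "simplicial_map M f" and x: "x \<in> C"
  shows "letter_map f (I x) = I (letter_map f x)"
  using inv_unique letter_map_mult[OF f] letter_map_one[OF f] inv_right[OF x] by metis

lemma simplicial_aut_map: "simplicial_aut M f \<Longrightarrow> simplicial_map M f"
  unfolding simplicial_aut_def by blast

lemma simplicial_aut_inverse: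
  "simplicial_aut M f \<Longrightarrow>
   \<exists>g. simplicial_map M g \<and> (\<forall>n. \<forall>w\<in>simp M n. g n (f n w) = w \<and> f n (g n w) = w)"
  unfolding simplicial_aut_def by blast

lemma simplicial_map_comp:
  assumes f: "simplicial_map M f" and g: "simplicial_map M g"
  shows "simplicial_map M (\<lambda>n w. f n (g n w))"
  unfolding simplicial_map_def
proof (intro conjI allI ballI impI)
  fix n w assume w: "w \<in> simp M n"
  show "f n (g n w) \<in> simp M n" using simplicial_map_simp[OF f simplicial_map_simp[OF g w]] .
  fix i assume i: "i \<le> n"
  show "f (Suc n) (g (Suc n) (degen M n i w)) = degen M n i (f n (g n w))"
    using simplicial_map_degen[OF g w i] simplicial_map_degen[OF f simplicial_map_simp[OF g w] i] by simp
  assume "0 < n"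
  then show "f (n - 1) (g (n - 1) (face M n i w)) = face M n i (f n (g n w))"
    using simplicial_map_face[OF g w i] simplicial_map_face[OF f simplicial_map_simp[OF g w] i] by simp
qed

lemma simplicial_aut_comp:
  assumes f: "simplicial_aut M f" and g: "simplicial_aut M g"
  shows "simplicial_aut M (\<lambda>n w. f n (g n w))"
proof -
  obtain f' where f': "simplicial_map M f'" "\<forall>n. \<forall>w\<in>simp M n. f' n (f n w) = w \<and> f n (f' n w) = w"
    using simplicial_aut_inverse[OF f] by blast
  obtain g' where g': "simplicial_map M g'" "\<forall>n. \<forall>w\<in>simp M n. g' n (g n w) = w \<and> g n (g' n w) = w"
    using simplicial_aut_inverse[OF g] by blast
  show ?thesis unfolding simplicial_aut_def
  proof (intro conjI exI[of _ "\<lambda>n w. g' n (f' n w)"] allI ballI)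
    show "simplicial_map M (\<lambda>n w. f n (g n w))"
      using simplicial_map_comp[OF simplicial_aut_map[OF f] simplicial_aut_map[OF g]] .
    show "simplicial_map M (\<lambda>n w. g' n (f' n w))" using simplicial_map_comp[OF g'(1) f'(1)] .
    fix n w assume w: "w \<in> simp M n"
    show "g' n (f' n (f n (g n w))) = w"
      using f'(2) g'(2) w simplicial_map_simp[OF simplicial_aut_map[OF g] w] by simp
    show "f n (g n (g' n (f' n w))) = w" using f'(2) g'(2) w simplicial_map_simp[OF f'(1) w] by simp
  qed
qed

lemma simplicial_aut_cong:
  assumes f: "simplicial_aut M f" and agree: "\<And>n w. w \<in> simp M n \<Longrightarrow> h n w = f n w"
  shows "simplicial_aut M h"
proof -
  have fm: "simplicial_map M f" using simplicial_aut_map[OF f] .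
  obtain g where g: "simplicial_map M g" "\<forall>n. \<forall>w\<in>simp M n. g n (f n w) = w \<and> f n (g n w) = w"
    using simplicial_aut_inverse[OF f] by blast
  have "simplicial_map M h" unfolding simplicial_map_def
  proof (intro conjI allI ballI impI)
    fix n w assume w: "w \<in> simp M n"
    show "h n w \<in> simp M n" using simplicial_map_simp[OF fm w] agree[OF w] by simp
    fix i assume i: "i \<le> n"
    show "h (Suc n) (degen M n i w) = degen M n i (h n w)"
      using simplicial_map_degen[OF fm w i] agree[OF w] agree[OF degen_in_simp[OF w i]] by simp
    assume n: "0 < n"
    show "h (n - 1) (face M n i w) = face M n i (h n w)"
      using simplicial_map_face[OF fm w i n] agree[OF w] agree[OF face_in_simp[OF w n i]] by simp
  qed
  moreover have "\<forall>n. \<forall>w\<in>simp M n. g n (h n w) = w \<and> h n (g n w) = w"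
    using g agree simplicial_map_simp[OF g(1)] by simp
  ultimately show ?thesis unfolding simplicial_aut_def using g(1) by blast
qed

text \<open>The edge \<open>{j, j + 1}\<close> of the \<open>n\<close>-simplex \<open>k\<close> of \<open>\<Delta>[1]\<close>, encoded like \<open>k\<close> by the
  number of its vertices sent to \<open>0\<close>.\<close>

definition edge_restrict :: "nat \<Rightarrow> nat \<Rightarrow> nat" where
  "edge_restrict k j = (if Suc j < k then 2 else if Suc j = k then 1 else 0)"

lemma
  assumes "simplicial_homotopy M F f g" and w: "w \<in> simp M n"
  shows homotopy_simp: "k \<le> Suc n \<Longrightarrow> F n w k \<in> simp M n"
    and homotopy_face: "k \<le> Suc n \<Longrightarrow> i \<le> n \<Longrightarrow> 0 < n \<Longrightarrow>
      F (n - 1) (face M n i w) (d1_face i k) = face M n i (F n w k)"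
    and homotopy_ends: "F n w (Suc n) = f n w \<and> F n w 0 = g n w"
  using assms unfolding simplicial_homotopy_def by (elim conjE; simp)+

lemma homotopy_spine:
  assumes F: "simplicial_homotopy M F f g"
  shows "w \<in> simp M n \<Longrightarrow> k \<le> Suc n \<Longrightarrow> j < n \<Longrightarrow>
    F n w k ! j = hd (F (Suc 0) [w ! j] (edge_restrict k j))"
proof (induction n arbitrary: w k j rule: less_induct)
  case (less n)
  note w = less.prems(1) and k = less.prems(2) and j = less.prems(3)
  have lw: "length w = n" using simplexD[OF w] by auto
  have v: "F n w k \<in> simp M n" using homotopy_simp[OF F w k] .
  have lv: "length (F n w k) = n" using simplexD[OF v] by auto
  consider "n = Suc 0" | m where "n = Suc (Suc m)" using j by (cases n; cases "n - 1") auto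
  then show ?case
  proof cases
    case 1
    then obtain x where "w = [x]" using lw by (auto simp: length_Suc_conv)
    moreover have "edge_restrict k j = k" "j = 0" using 1 k j unfolding edge_restrict_def by auto
    ultimately show ?thesis using 1 lv by (cases "F n w k") auto
  next
    case (2 m)
    then have n: "0 < n" by simp
    have IH: "\<And>u k' j'. u \<in> simp M (n - 1) \<Longrightarrow> k' \<le> n \<Longrightarrow> j' < n - 1 \<Longrightarrow>
       F (n - 1) u k' ! j' = hd (F (Suc 0) [u ! j'] (edge_restrict k' j'))"
      using less.IH[of "n - 1"] n by simp
    show ?thesis
    proof (cases "j < n - 1")
      case True
      have dk: "d1_face n k \<le> n" using k unfolding d1_face_def by auto
      have "F n w k ! j = butlast (F n w k) ! j" using True lv by (simp add: nth_butlast)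
      also have "\<dots> = F (n - 1) (butlast w) (d1_face n k) ! j"
        using homotopy_face[OF F w k _ n, where i = n] n by (simp add: face_def)
      also have "\<dots> = hd (F (Suc 0) [butlast w ! j] (edge_restrict (d1_face n k) j))"
        using IH[OF face_in_simp[OF w n, of n] dk True] n by (simp add: face_def)
      also have "butlast w ! j = w ! j" using True lw by (simp add: nth_butlast)
      also have "edge_restrict (d1_face n k) j = edge_restrict k j"
        using True k unfolding edge_restrict_def d1_face_def by auto
      finally show ?thesis .
    next
      case False
      then have jn: "j = n - 1" "0 < j" using j 2 by auto
      have dk: "d1_face 0 k \<le> n" using k unfolding d1_face_def by auto
      have jj: "j - 1 < n - 1" using jn 2 by auto
      have "F n w k ! j = tl (F n w k) ! (j - 1)" using jn lv by (simp add: nth_tl Suc_diff_Suc)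
      also have "\<dots> = F (n - 1) (tl w) (d1_face 0 k) ! (j - 1)"
        using homotopy_face[OF F w k _ n, where i = 0] by (simp add: face_def)
      also have "\<dots> = hd (F (Suc 0) [tl w ! (j - 1)] (edge_restrict (d1_face 0 k) (j - 1)))"
        using IH[OF face_in_simp[OF w n, of 0] dk jj] by (simp add: face_def)
      also have "tl w ! (j - 1) = w ! j" using jn lw by (simp add: nth_tl Suc_diff_Suc)
      also have "edge_restrict (d1_face 0 k) (j - 1) = edge_restrict k j"
        using jn k unfolding edge_restrict_def d1_face_def by auto
      finally show ?thesis .
    qed
  qed
qed


section \<open>The normaliser\<close>

text \<open>The words \<open>\<omega>\<^sub>i\<close> of condition (ii) in the definition of \<open>N(M)\<close>, with conjugation by \<open>\<eta>\<close>
  generalised to an arbitrary letter map \<open>a\<close>.\<close>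

definition omega :: "('a \<Rightarrow> 'a) \<Rightarrow> 'a \<Rightarrow> 'a list \<Rightarrow> nat \<Rightarrow> 'a list" where
  "omega a \<eta> w i = map a (take i w) @ [\<eta>] @ drop i w"

lemma omega_0 [simp]: "omega a \<eta> w 0 = \<eta> # w"
  unfolding omega_def by simp

lemma nth_omega:
  "i \<le> length w \<Longrightarrow> j < Suc (length w) \<Longrightarrow>
   omega a \<eta> w i ! j = (if j < i then a (w ! j) else if j = i then \<eta> else w ! (j - 1))"
  unfolding omega_def by (auto simp: nth_append min_def)

lemma omega_cong: "(\<And>x. x \<in> C \<Longrightarrow> a x = b x) \<Longrightarrow> set w \<subseteq> C \<Longrightarrow> omega a \<eta> w i = omega b \<eta> w i"
  unfolding omega_def by (auto dest: in_set_takeD)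

lemma mem_N_iff:
  "\<eta> \<in> pg_N M \<longleftrightarrow> \<eta> \<in> C \<and>
     (\<forall>x\<in>C. [\<eta>, x, I \<eta>] \<in> D) \<and>
     (\<exists>f. simplicial_aut M f \<and> (\<forall>x\<in>C. f (Suc 0) [x] = [pg_conj M \<eta> x])) \<and>
     (\<forall>w\<in>D. \<forall>i\<le>length w. omega (pg_conj M \<eta>) \<eta> w i \<in> D \<and>
        P (omega (pg_conj M \<eta>) \<eta> w i) = P (\<eta> # w))"
  unfolding pg_N_def omega_def by simp

text \<open>Condition (ii) for the letter map \<open>a\<close> of a simplicial map already forces \<open>a\<close> to be
  conjugation by \<open>\<eta>\<close>: compare \<open>\<omega>\<^sub>0\<close> and \<open>\<omega>\<^sub>2\<close> on the word \<open>[x|\<eta>\<^sup>-\<^sup>1]\<close>.\<close>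

lemma letter_map_eq_conj:
  assumes f: "simplicial_map M f" and eta: "\<eta> \<in> C" and x: "x \<in> C"
    and omega: "\<And>w i. w \<in> D \<Longrightarrow> i \<le> length w \<Longrightarrow>
      omega (letter_map f) \<eta> w i \<in> D \<and> P (omega (letter_map f) \<eta> w i) = P (\<eta> # w)"
  shows "[\<eta>, x, I \<eta>] \<in> D \<and> pg_conj M \<eta> x = letter_map f x"
proof -
  let ?a = "letter_map f"
  have ieta: "I \<eta> \<in> C" using inv_in_carrier[OF eta] .
  have ax: "?a x \<in> C" using letter_map_in_carrier[OF f x] .
  have "[?a (I \<eta>), \<eta>] \<in> D" "P [?a (I \<eta>), \<eta>] = e"
    using omega[of "[I \<eta>]" 1] singleton_in_dom[OF ieta] inv_right[OF eta] by (simp_all add: omega_def)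
  then have "\<eta> = I (?a (I \<eta>))" by (rule inv_unique)
  then have a_inv: "?a (I \<eta>) = I \<eta>" using letter_map_in_carrier[OF f ieta] inv_inv by metis
  have "[?a x, \<eta>, I x] \<in> D" using omega[of "[x, I x]" 1] inv_right[OF x] by (simp add: omega_def)
  then have "[x, I \<eta>] @ [I (?a x), ?a x, \<eta>, I x] \<in> D" using dom_inv_word_append x by force
  then have x_inv: "[x, I \<eta>] \<in> D" by (rule dom_appendD1)
  have dom: "[\<eta>, x, I \<eta>] \<in> D" using omega[OF x_inv, of 0] by simp
  have "[?a x, I \<eta>, \<eta>] \<in> D" "P [?a x, I \<eta>, \<eta>] = P [\<eta>, x, I \<eta>]"
    using omega[OF x_inv, of 2] a_inv by (simp_all add: omega_def)
  then have "pg_conj M \<eta> x = P [?a x, P [I \<eta>, \<eta>]]" using prod_assoc3 by (simp add: pg_conj_def)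
  also have "\<dots> = ?a x" using inv_left[OF eta] one_right[OF ax] by simp
  finally show ?thesis using dom by simp
qed

lemma N_memI:
  assumes f: "simplicial_aut M f" and eta: "\<eta> \<in> C"
    and omega: "\<And>w i. w \<in> D \<Longrightarrow> i \<le> length w \<Longrightarrow>
      omega (letter_map f) \<eta> w i \<in> D \<and> P (omega (letter_map f) \<eta> w i) = P (\<eta> # w)"
  shows "\<eta> \<in> pg_N M" and "\<forall>x\<in>C. pg_conj M \<eta> x = letter_map f x"
proof -
  have fm: "simplicial_map M f" using simplicial_aut_map[OF f] .
  have conj: "\<And>x. x \<in> C \<Longrightarrow> [\<eta>, x, I \<eta>] \<in> D \<and> pg_conj M \<eta> x = letter_map f x"
    using letter_map_eq_conj[OF fm eta _ omega] by blast
  then show "\<forall>x\<in>C. pg_conj M \<eta> x = letter_map f x" by blast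
  have "omega (pg_conj M \<eta>) \<eta> w i = omega (letter_map f) \<eta> w i" if "w \<in> D" for w i
    using omega_cong conj dom_in_carrier[OF that] by blast
  then show "\<eta> \<in> pg_N M"
    unfolding mem_N_iff using eta conj omega f simplicial_map_singleton[OF fm] by auto
qed

lemma N_in_carrier: "\<eta> \<in> pg_N M \<Longrightarrow> \<eta> \<in> C"
  unfolding mem_N_iff by blast

lemma N_omega:
  "\<eta> \<in> pg_N M \<Longrightarrow> w \<in> D \<Longrightarrow> i \<le> length w \<Longrightarrow>
   omega (pg_conj M \<eta>) \<eta> w i \<in> D \<and> P (omega (pg_conj M \<eta>) \<eta> w i) = P (\<eta> # w)"
  unfolding mem_N_iff by blast

lemma N_Cons_in_dom: "\<eta> \<in> pg_N M \<Longrightarrow> w \<in> D \<Longrightarrow> \<eta> # w \<in> D"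
  using N_omega[of \<eta> w 0] by simp

lemma N_words_in_dom: "set w \<subseteq> pg_N M \<Longrightarrow> w \<in> D"
  by (induction w) (auto intro: N_Cons_in_dom)

lemma N_conj_aut:
  assumes "\<eta> \<in> pg_N M"
  obtains f where "simplicial_aut M f" "\<And>x. x \<in> C \<Longrightarrow> letter_map f x = pg_conj M \<eta> x"
proof -
  obtain f where f: "simplicial_aut M f" "\<forall>x\<in>C. f (Suc 0) [x] = [pg_conj M \<eta> x]"
    using assms unfolding mem_N_iff by blast
  show thesis
  proof (rule that)
    show "simplicial_aut M f" by (fact f(1))
    show "letter_map f x = pg_conj M \<eta> x" if "x \<in> C" for x
      using f(2) that by (simp add: letter_map_def)
  qed
qed

lemma conj_in_carrier:
  assumes "\<eta> \<in> pg_N M" and x: "x \<in> C"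
  shows "pg_conj M \<eta> x \<in> C"
proof -
  obtain f where f: "simplicial_aut M f" "\<And>x. x \<in> C \<Longrightarrow> letter_map f x = pg_conj M \<eta> x"
    using N_conj_aut assms(1) by blast
  show ?thesis using letter_map_in_carrier[OF simplicial_aut_map[OF f(1)] x] f(2)[OF x] by simp
qed

lemma conj_one:
  assumes "\<eta> \<in> pg_N M"
  shows "pg_conj M \<eta> e = e"
proof -
  obtain f where f: "simplicial_aut M f" "\<And>x. x \<in> C \<Longrightarrow> letter_map f x = pg_conj M \<eta> x"
    using N_conj_aut assms by blast
  show ?thesis using letter_map_one[OF simplicial_aut_map[OF f(1)]] f(2)[OF one_in_carrier] by simp
qed

lemma conj_mult:
  assumes "\<eta> \<in> pg_N M" and ab: "[a, b] \<in> D"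
  shows "[pg_conj M \<eta> a, pg_conj M \<eta> b] \<in> D \<and>
    pg_conj M \<eta> (P [a, b]) = P [pg_conj M \<eta> a, pg_conj M \<eta> b]"
proof -
  obtain f where f: "simplicial_aut M f" "\<And>x. x \<in> C \<Longrightarrow> letter_map f x = pg_conj M \<eta> x"
    using N_conj_aut assms(1) by blast
  show ?thesis
    using letter_map_mult[OF simplicial_aut_map[OF f(1)] ab] f(2) pair_in_carrier[OF ab] prod_in_carrier[OF ab]
    by simp
qed

text \<open>Normalised to be \<open>undefined\<close> off the simplices, as the elements of \<open>Inn M\<close> are.\<close>

definition conj_aut :: "'a \<Rightarrow> nat \<Rightarrow> 'a list \<Rightarrow> 'a list" where
  "conj_aut \<eta> n w = (if w \<in> simp M n then map (pg_conj M \<eta>) w else undefined)"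

lemma simplicial_aut_conj_aut:
  assumes "\<eta> \<in> pg_N M"
  shows "simplicial_aut M (conj_aut \<eta>)"
proof -
  obtain f where f: "simplicial_aut M f" "\<And>x. x \<in> C \<Longrightarrow> letter_map f x = pg_conj M \<eta> x"
    using N_conj_aut assms by blast
  have "conj_aut \<eta> n w = f n w" if w: "w \<in> simp M n" for n w
    using simplicial_map_spine[OF simplicial_aut_map[OF f(1)] w] map_eq_on_dom[OF f(2)] simplexD[OF w] w
    unfolding conj_aut_def by simp
  then show ?thesis using simplicial_aut_cong[OF f(1)] by blast
qed

lemma map_conj_in_simp:
  assumes "\<eta> \<in> pg_N M" and w: "w \<in> simp M n"
  shows "map (pg_conj M \<eta>) w \<in> simp M n"
  using simplicial_map_simp[OF simplicial_aut_map[OF simplicial_aut_conj_aut[OF assms(1)]] w] w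
  by (simp add: conj_aut_def)

lemma letter_map_conj_aut: "x \<in> C \<Longrightarrow> letter_map (conj_aut \<eta>) x = pg_conj M \<eta> x"
  using singleton_in_simp_1 unfolding letter_map_def conj_aut_def by simp

lemma one_in_N: "e \<in> pg_N M" and conj_by_one: "\<forall>x\<in>C. pg_conj M e x = x"
proof -
  have id_aut: "simplicial_aut M (\<lambda>n w. w)"
    unfolding simplicial_aut_def simplicial_map_def by auto
  have letter_id: "letter_map (\<lambda>n w. w) x = x" for x
    unfolding letter_map_def by simp
  have "omega (letter_map (\<lambda>n w. w)) e w i \<in> D \<and> P (omega (letter_map (\<lambda>n w. w)) e w i) = P (e # w)"
    if "w \<in> D" for w i
    using insert_one[of "take i w" "drop i w"] insert_one[of "[]" w] that
    unfolding omega_def letter_id by simp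
  then show "e \<in> pg_N M" "\<forall>x\<in>C. pg_conj M e x = x"
    using N_memI[OF id_aut one_in_carrier] letter_id by auto
qed

lemma omega_omega:
  "i \<le> length w \<Longrightarrow> omega a \<eta> (omega b \<theta> w i) i = map a (map b (take i w)) @ [\<eta>, \<theta>] @ drop i w"
  unfolding omega_def by simp

lemma prod_Cons_Cons: "x # y # w \<in> D \<Longrightarrow> P (x # y # w) = P (P [x, y] # w)"
  using prod_collapse[of "[]" "[x, y]" w] by simp

lemma omega_mult:
  assumes eta: "\<eta> \<in> pg_N M" and theta: "\<theta> \<in> pg_N M" and w: "w \<in> D" and i: "i \<le> length w"
  shows "omega (\<lambda>x. pg_conj M \<eta> (pg_conj M \<theta> x)) (P [\<eta>, \<theta>]) w i \<in> D \<and>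
    P (omega (\<lambda>x. pg_conj M \<eta> (pg_conj M \<theta> x)) (P [\<eta>, \<theta>]) w i) = P (P [\<eta>, \<theta>] # w)"
proof -
  let ?c = "\<lambda>x. pg_conj M \<eta> (pg_conj M \<theta> x)"
  define u where "u = omega (pg_conj M \<theta>) \<theta> w i"
  have u: "u \<in> D" "P u = P (\<theta> # w)" using N_omega[OF theta w i] u_def by simp_all
  have "i \<le> length u" using i unfolding u_def omega_def by simp
  moreover have "omega (pg_conj M \<eta>) \<eta> u i = map ?c (take i w) @ [\<eta>, \<theta>] @ drop i w"
    using omega_omega[OF i] unfolding u_def by simp
  ultimately have v: "map ?c (take i w) @ [\<eta>, \<theta>] @ drop i w \<in> D"
    "P (map ?c (take i w) @ [\<eta>, \<theta>] @ drop i w) = P (\<eta> # u)"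
    using N_omega[OF eta u(1), of i] by simp_all
  have "omega ?c (P [\<eta>, \<theta>]) w i \<in> D" "P (omega ?c (P [\<eta>, \<theta>]) w i) = P (\<eta> # u)"
    using dom_collapse[OF v(1)] prod_collapse[OF v(1)] v(2) unfolding omega_def by simp_all
  moreover have "P (\<eta> # u) = P (P [\<eta>, \<theta>] # w)"
    using prod_Cons[OF N_Cons_in_dom[OF eta u(1)]] u(2)
      prod_Cons[OF N_Cons_in_dom[OF eta N_Cons_in_dom[OF theta w]]]
      prod_Cons_Cons[OF N_Cons_in_dom[OF eta N_Cons_in_dom[OF theta w]]] by simp
  ultimately show ?thesis by simp
qed

lemma mult_in_N:
  assumes eta: "\<eta> \<in> pg_N M" and theta: "\<theta> \<in> pg_N M"
  shows "P [\<eta>, \<theta>] \<in> pg_N M"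
    and "\<forall>x\<in>C. pg_conj M (P [\<eta>, \<theta>]) x = pg_conj M \<eta> (pg_conj M \<theta> x)"
proof -
  let ?c = "\<lambda>x. pg_conj M \<eta> (pg_conj M \<theta> x)"
  define \<alpha> where "\<alpha> = (\<lambda>n w. conj_aut \<eta> n (conj_aut \<theta> n w))"
  have aut: "simplicial_aut M \<alpha>"
    unfolding \<alpha>_def using simplicial_aut_comp simplicial_aut_conj_aut eta theta by blast
  have letter: "letter_map \<alpha> x = ?c x" if "x \<in> C" for x
    using that singleton_in_simp_1 conj_in_carrier[OF theta]
    unfolding \<alpha>_def letter_map_def conj_aut_def by simp
  have "omega ?c (P [\<eta>, \<theta>]) w i \<in> D \<and> P (omega ?c (P [\<eta>, \<theta>]) w i) = P (P [\<eta>, \<theta>] # w)"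
    if "w \<in> D" and "i \<le> length w" for w i
    using omega_mult[OF eta theta that] .
  moreover have "omega (letter_map \<alpha>) \<eta>' w i = omega ?c \<eta>' w i" if "w \<in> D" for \<eta>' w i
    using omega_cong[OF letter dom_in_carrier[OF that]] .
  moreover have "P [\<eta>, \<theta>] \<in> C" using prod_in_carrier N_words_in_dom eta theta by simp
  ultimately show "P [\<eta>, \<theta>] \<in> pg_N M" "\<forall>x\<in>C. pg_conj M (P [\<eta>, \<theta>]) x = ?c x"
    using N_memI[OF aut, of "P [\<eta>, \<theta>]"] letter by simp_all
qed

lemma map_inv_word:
  "set w \<subseteq> C \<Longrightarrow> (\<And>x. x \<in> C \<Longrightarrow> a (I x) = I (a x)) \<Longrightarrow> map a (inv_word w) = inv_word (map a w)"
  by (induction w) auto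

lemma inv_word_omega:
  assumes w: "set w \<subseteq> C" and i: "i \<le> length w" and eta: "\<eta> \<in> C"
    and ca: "\<And>x. x \<in> C \<Longrightarrow> c (a x) = x" and a_inv: "\<And>x. x \<in> C \<Longrightarrow> a (I x) = I (a x)"
  shows "inv_word (omega a (I \<eta>) w i) = omega c \<eta> (map a (inv_word w)) (length w - i)"
proof -
  have "map a (inv_word w) = map a (inv_word (drop i w)) @ map a (inv_word (take i w))"
    by (metis append_take_drop_id inv_word_simps(3) map_append)
  then have take: "take (length w - i) (map a (inv_word w)) = map a (inv_word (drop i w))"
    and drop: "drop (length w - i) (map a (inv_word w)) = map a (inv_word (take i w))"
    by simp_all
  have "set (inv_word (drop i w)) \<subseteq> C"
    using set_inv_word_subset w set_drop_subset by (metis order_trans)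
  then have "map c (map a (inv_word (drop i w))) = inv_word (drop i w)"
    using ca by (auto intro!: map_idI)
  moreover have "map a (inv_word (take i w)) = inv_word (map a (take i w))"
    using map_inv_word[of "take i w" a] a_inv w set_take_subset by (metis order_trans)
  ultimately show ?thesis
    unfolding omega_def take drop using eta by simp
qed

text \<open>Inverting \<open>\<omega>\<^sub>i\<close> for \<open>\<eta>\<^sup>-\<^sup>1\<close> turns it into \<open>\<omega>\<^sub>n\<^sub>-\<^sub>i\<close> for \<open>\<eta>\<close>, whose product does not depend
  on \<open>i\<close>.\<close>

lemma omega_inverse:
  assumes eta: "\<eta> \<in> pg_N M" and g: "simplicial_map M g"
    and ca: "\<And>x. x \<in> C \<Longrightarrow> pg_conj M \<eta> (letter_map g x) = x"
    and w: "w \<in> D" and i: "i \<le> length w"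
  shows "omega (letter_map g) (I \<eta>) w i \<in> D \<and>
    P (omega (letter_map g) (I \<eta>) w i) = I (P (\<eta> # map (letter_map g) (inv_word w)))"
proof -
  let ?a = "letter_map g"
  let ?t = "omega ?a (I \<eta>) w i"
  have eC: "\<eta> \<in> C" using N_in_carrier[OF eta] .
  have wC: "set w \<subseteq> C" using dom_in_carrier[OF w] .
  have "inv_word ?t = omega (pg_conj M \<eta>) \<eta> (map ?a (inv_word w)) (length w - i)"
    using inv_word_omega[OF wC i eC ca letter_map_inv[OF g]] .
  then have t: "inv_word ?t \<in> D" "P (inv_word ?t) = P (\<eta> # map ?a (inv_word w))"
    using N_omega[OF eta map_letter_map_in_dom[OF g inv_word_in_dom[OF w]]] by simp_all
  have "set ?t \<subseteq> C"
    unfolding omega_def using wC letter_map_in_carrier[OF g] inv_in_carrier[OF eC]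
      set_take_subset[of i w] set_drop_subset[of i w]
    by auto
  then have "inv_word (inv_word ?t) = ?t" by (rule inv_word_inv_word)
  then show ?thesis using inv_word_in_dom[OF t(1)] prod_inv_word[OF t(1)] t(2) by simp
qed

lemma inv_in_N:
  assumes eta: "\<eta> \<in> pg_N M"
  shows "I \<eta> \<in> pg_N M" and "\<forall>x\<in>C. pg_conj M \<eta> (pg_conj M (I \<eta>) x) = x"
proof -
  obtain g where g: "simplicial_map M g"
    and inverse: "\<forall>n. \<forall>w\<in>simp M n. g n (conj_aut \<eta> n w) = w \<and> conj_aut \<eta> n (g n w) = w"
    using simplicial_aut_inverse[OF simplicial_aut_conj_aut[OF eta]] by blast
  have g_aut: "simplicial_aut M g"
    unfolding simplicial_aut_def using g simplicial_aut_map[OF simplicial_aut_conj_aut[OF eta]] inverse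
    by blast
  let ?a = "letter_map g"
  have eC: "\<eta> \<in> C" using N_in_carrier[OF eta] .
  have aC: "\<And>x. x \<in> C \<Longrightarrow> ?a x \<in> C" using letter_map_in_carrier[OF g] .
  have ca: "pg_conj M \<eta> (?a x) = x" if x: "x \<in> C" for x
    using inverse singleton_in_simp_1[OF x] simplicial_map_singleton[OF g x]
      letter_map_conj_aut[OF aC[OF x], of \<eta>] unfolding letter_map_def by (metis list.sel(1))
  have omega_inv: "\<And>w i. w \<in> D \<Longrightarrow> i \<le> length w \<Longrightarrow> omega ?a (I \<eta>) w i \<in> D \<and>
      P (omega ?a (I \<eta>) w i) = I (P (\<eta> # map ?a (inv_word w)))"
    using omega_inverse[OF eta g] ca by blast
  have "omega ?a (I \<eta>) w i \<in> D \<and> P (omega ?a (I \<eta>) w i) = P (I \<eta> # w)"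
    if "w \<in> D" "i \<le> length w" for w i
    using omega_inv[OF that] omega_inv[OF that(1), of 0] by simp
  then show "I \<eta> \<in> pg_N M" "\<forall>x\<in>C. pg_conj M \<eta> (pg_conj M (I \<eta>) x) = x"
    using N_memI[OF g_aut inv_in_carrier[OF eC]] ca by simp_all
qed

lemma prod_in_N: "set w \<subseteq> pg_N M \<Longrightarrow> P w \<in> pg_N M"
proof (induction w)
  case Nil
  then show ?case using one_in_N by (simp add: pg_one_def)
next
  case (Cons x w)
  then show ?case using prod_Cons[OF N_words_in_dom[OF Cons.prems]] mult_in_N(1) by simp
qed

lemma N_subgroup: "pg_subgroup M (pg_N M)"
  unfolding pg_subgroup_def lists_eq_set
  using N_in_carrier N_words_in_dom prod_in_N inv_in_N(1) by blast

lemma mem_Z_iff: "z \<in> pg_Z M \<longleftrightarrow> z \<in> pg_N M \<and> (\<forall>x\<in>C. pg_conj M z x = x)"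
  unfolding pg_Z_def by simp

lemma Z_subset_N: "pg_Z M \<subseteq> pg_N M"
  unfolding pg_Z_def by blast

lemma prod_in_Z: "set w \<subseteq> pg_Z M \<Longrightarrow> P w \<in> pg_Z M"
proof (induction w)
  case Nil
  then show ?case using one_in_N conj_by_one by (simp add: mem_Z_iff pg_one_def)
next
  case (Cons z w)
  then have "z \<in> pg_N M" "P w \<in> pg_N M" "\<forall>x\<in>C. pg_conj M z x = x" "\<forall>x\<in>C. pg_conj M (P w) x = x"
    by (simp_all add: mem_Z_iff)
  moreover have "z # w \<in> D" using N_words_in_dom Cons.prems Z_subset_N by blast
  then have "P (z # w) = P [z, P w]" using prod_Cons by blast
  ultimately show ?case using mult_in_N unfolding mem_Z_iff by simp
qed

lemma inv_in_Z:
  assumes z: "z \<in> pg_Z M"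
  shows "I z \<in> pg_Z M"
proof -
  have zN: "z \<in> pg_N M" and zc: "\<forall>y\<in>C. pg_conj M z y = y" using z unfolding mem_Z_iff by auto
  have "pg_conj M (I z) x = x" if "x \<in> C" for x
  proof -
    have "pg_conj M (I z) x = pg_conj M z (pg_conj M (I z) x)"
      using zc conj_in_carrier[OF inv_in_N(1)[OF zN] that] by simp
    also have "\<dots> = x" using inv_in_N(2)[OF zN] that by simp
    finally show ?thesis .
  qed
  then show ?thesis unfolding mem_Z_iff using inv_in_N(1)[OF zN] by blast
qed

lemma Z_central:
  assumes z: "z \<in> pg_Z M" and x: "x \<in> C"
  shows "P [x, z] = P [z, x]"
  using N_omega[of z "[x]" 1] singleton_in_dom[OF x] z x unfolding mem_Z_iff omega_def by simp

lemma Z_commute: "x \<in> pg_Z M \<Longrightarrow> y \<in> pg_Z M \<Longrightarrow> P [x, y] = P [y, x]"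
  using Z_central Z_subset_N N_in_carrier by blast

lemma Z_subgroup: "pg_subgroup M (pg_Z M)"
  unfolding pg_subgroup_def lists_eq_set
  using Z_subset_N N_in_carrier N_words_in_dom prod_in_Z inv_in_Z by auto

section \<open>Conjugation by an element of \<open>N(M)\<close> is inner\<close>

text \<open>On the \<open>n\<close>-simplex \<open>k\<close> of \<open>\<Delta>[1]\<close> the homotopy sends \<open>[x\<^sub>1|\<dots>|x\<^sub>n]\<close> to \<open>\<omega>\<^sub>k\<^sub>-\<^sub>1\<close>
  with the letter \<open>\<eta>\<close> multiplied into its right neighbour:
  \<open>[\<^sup>\<eta>x\<^sub>1|\<dots>|\<^sup>\<eta>x\<^sub>k\<^sub>-\<^sub>1|\<eta>x\<^sub>k|x\<^sub>k\<^sub>+\<^sub>1|\<dots>|x\<^sub>n]\<close>. The degree \<open>n\<close> is redundant (it is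
  \<open>length w\<close>) and only matches the shape of a simplicial homotopy.\<close>

definition conj_homotopy_letter :: "'a \<Rightarrow> nat \<Rightarrow> nat \<Rightarrow> 'a \<Rightarrow> 'a" where
  "conj_homotopy_letter \<eta> k j x =
     (if Suc j < k then pg_conj M \<eta> x else if Suc j = k then P [\<eta>, x] else x)"

definition conj_homotopy :: "'a \<Rightarrow> nat \<Rightarrow> 'a list \<Rightarrow> nat \<Rightarrow> 'a list" where
  "conj_homotopy \<eta> n w k = map (\<lambda>j. conj_homotopy_letter \<eta> k j (w ! j)) [0..<length w]"

lemma length_conj_homotopy [simp]: "length (conj_homotopy \<eta> n w k) = length w"
  unfolding conj_homotopy_def by simp

lemma nth_conj_homotopy: "j < length w \<Longrightarrow> conj_homotopy \<eta> n w k ! j = conj_homotopy_letter \<eta> k j (w ! j)"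
  unfolding conj_homotopy_def by simp

lemma conj_homotopy_0: "conj_homotopy \<eta> n w 0 = w"
  by (rule nth_equalityI) (auto simp: nth_conj_homotopy conj_homotopy_letter_def)

lemma conj_homotopy_top: "length w = n \<Longrightarrow> conj_homotopy \<eta> n w (Suc n) = map (pg_conj M \<eta>) w"
  by (rule nth_equalityI) (auto simp: nth_conj_homotopy conj_homotopy_letter_def)

lemma conj_homotopy_inner:
  "length w = n \<Longrightarrow> 0 < k \<Longrightarrow> k \<le> n \<Longrightarrow>
   conj_homotopy \<eta> n w k = map (pg_conj M \<eta>) (take (k - 1) w) @ [P [\<eta>, w ! (k - 1)]] @ drop k w"
  by (rule nth_equalityI) (auto simp: nth_conj_homotopy conj_homotopy_letter_def nth_append min_def)

lemma conj_homotopy_in_simp: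
  assumes eta: "\<eta> \<in> pg_N M" and w: "w \<in> simp M n" and k: "k \<le> Suc n"
  shows "conj_homotopy \<eta> n w k \<in> simp M n"
proof -
  have wD: "w \<in> D" and lw: "length w = n" using simplexD[OF w] by auto
  consider "k = 0" | "k = Suc n" | "0 < k" "k \<le> n" using k by linarith
  then show ?thesis
  proof cases
    case 1
    then show ?thesis using conj_homotopy_0 w by simp
  next
    case 2
    then show ?thesis using conj_homotopy_top[OF lw] map_conj_in_simp[OF eta w] by simp
  next
    case 3
    have "drop (k - 1) w = [w ! (k - 1)] @ drop k w" using Cons_nth_drop_Suc[of "k - 1" w] 3 lw by simp
    then have "map (pg_conj M \<eta>) (take (k - 1) w) @ [\<eta>, w ! (k - 1)] @ drop k w \<in> D"
      using N_omega[OF eta wD, of "k - 1"] 3 lw unfolding omega_def by simp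
    then have "map (pg_conj M \<eta>) (take (k - 1) w) @ [P [\<eta>, w ! (k - 1)]] @ drop k w \<in> D"
      by (rule dom_collapse)
    then show ?thesis using conj_homotopy_inner[OF lw 3] lw 3 by (auto intro: simplexI)
  qed
qed

lemma prod_conj_eta_shift:
  assumes eta: "\<eta> \<in> pg_N M" and ab: "[a, b] \<in> D"
  shows "P [pg_conj M \<eta> a, P [\<eta>, b]] = P [\<eta>, P [a, b]]"
proof -
  have "[pg_conj M \<eta> a, \<eta>, b] \<in> D" "P [pg_conj M \<eta> a, \<eta>, b] = P [\<eta>, a, b]"
    using N_omega[OF eta ab, of 1] by (simp_all add: omega_def)
  then show ?thesis using prod_assoc3 N_Cons_in_dom[OF eta ab] by metis
qed

lemma conj_homotopy_letter_prod:
  assumes eta: "\<eta> \<in> pg_N M" and ab: "[a, b] \<in> D" and i: "0 < i"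
  shows "conj_homotopy_letter \<eta> (d1_face i k) (i - 1) (P [a, b]) =
    P [conj_homotopy_letter \<eta> k (i - 1) a, conj_homotopy_letter \<eta> k i b]"
proof -
  consider "Suc i < k" | "k = Suc i" | "k = i" | "k < i" by linarith
  then show ?thesis
  proof cases
    case 1
    then show ?thesis using conj_mult[OF eta ab] i
      by (auto simp: conj_homotopy_letter_def d1_face_def)
  next
    case 2
    then show ?thesis using prod_conj_eta_shift[OF eta ab] i
      by (auto simp: conj_homotopy_letter_def d1_face_def)
  next
    case 3
    then show ?thesis using prod_assoc3[OF N_Cons_in_dom[OF eta ab]] i
      by (auto simp: conj_homotopy_letter_def d1_face_def)
  next
    case 4
    then show ?thesis using i by (auto simp: conj_homotopy_letter_def d1_face_def)
  qed
qed

lemma conj_homotopy_face: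
  assumes eta: "\<eta> \<in> pg_N M" and w: "w \<in> simp M n" and i: "i \<le> n" and n: "0 < n"
  shows "conj_homotopy \<eta> (n - 1) (face M n i w) (d1_face i k) = face M n i (conj_homotopy \<eta> n w k)"
proof (rule nth_equalityI)
  have lw: "length w = n" using simplexD[OF w] by auto
  show "length (conj_homotopy \<eta> (n - 1) (face M n i w) (d1_face i k)) =
    length (face M n i (conj_homotopy \<eta> n w k))"
    using length_face[OF lw n i] length_face[of "conj_homotopy \<eta> n w k" n i] lw n i by simp
  fix j assume "j < length (conj_homotopy \<eta> (n - 1) (face M n i w) (d1_face i k))"
  then have j: "j < n - 1" using length_face[OF lw n i] by simp
  have L: "conj_homotopy \<eta> (n - 1) (face M n i w) (d1_face i k) ! j =
    conj_homotopy_letter \<eta> (d1_face i k) j (face M n i w ! j)"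
    using nth_conj_homotopy j length_face[OF lw n i] by simp
  have R: "face M n i (conj_homotopy \<eta> n w k) ! j =
    (if i = 0 then conj_homotopy \<eta> n w k ! Suc j else if i = n then conj_homotopy \<eta> n w k ! j
     else if j < i - 1 then conj_homotopy \<eta> n w k ! j
     else if j = i - 1 then P [conj_homotopy \<eta> n w k ! (i - 1), conj_homotopy \<eta> n w k ! i]
     else conj_homotopy \<eta> n w k ! Suc j)"
    using nth_face[of "conj_homotopy \<eta> n w k" n i j] lw n i j by simp
  have H: "\<And>m. m < n \<Longrightarrow> conj_homotopy \<eta> n w k ! m = conj_homotopy_letter \<eta> k m (w ! m)"
    using nth_conj_homotopy lw by simp
  note face_w = nth_face[OF lw n i j]
  consider "i = 0" | "i = n" | "0 < i" "i < n" "j < i - 1" | "0 < i" "i < n" "j = i - 1"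
    | "0 < i" "i < n" "i - 1 < j"
    using i by linarith
  then show "conj_homotopy \<eta> (n - 1) (face M n i w) (d1_face i k) ! j =
    face M n i (conj_homotopy \<eta> n w k) ! j"
  proof cases
    case 4
    then show ?thesis
      using L R face_w H conj_homotopy_letter_prod[OF eta adjacent_pair_in_dom[OF w]] by simp
  qed (use L R face_w H j n in \<open>auto simp: conj_homotopy_letter_def d1_face_def\<close>)
qed

lemma conj_homotopy_degen:
  assumes eta: "\<eta> \<in> pg_N M" and w: "w \<in> simp M n" and i: "i \<le> n"
  shows "conj_homotopy \<eta> (Suc n) (degen M n i w) (d1_degen i k) = degen M n i (conj_homotopy \<eta> n w k)"
proof (rule nth_equalityI)
  have lw: "length w = n" using simplexD[OF w] by auto
  show "length (conj_homotopy \<eta> (Suc n) (degen M n i w) (d1_degen i k)) =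
    length (degen M n i (conj_homotopy \<eta> n w k))"
    using length_degen[OF lw i] length_degen[of "conj_homotopy \<eta> n w k" n i] lw i by simp
  fix j assume "j < length (conj_homotopy \<eta> (Suc n) (degen M n i w) (d1_degen i k))"
  then have j: "j < Suc n" using length_degen[OF lw i] by simp
  then show "conj_homotopy \<eta> (Suc n) (degen M n i w) (d1_degen i k) ! j =
    degen M n i (conj_homotopy \<eta> n w k) ! j"
    using nth_degen[OF lw i j] nth_degen[of "conj_homotopy \<eta> n w k" n i j] lw i conj_one[OF eta]
      nth_conj_homotopy[of j "degen M n i w"] nth_conj_homotopy[of _ w] length_degen[OF lw i]
    by (auto simp: conj_homotopy_letter_def d1_degen_def)
qed

lemma conj_aut_in_Inn:
  assumes eta: "\<eta> \<in> pg_N M"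
  shows "conj_aut \<eta> \<in> carrier (Inn M)"
proof -
  have "simplicial_homotopy M (conj_homotopy \<eta>) (conj_aut \<eta>) (\<lambda>n w. w)"
    unfolding simplicial_homotopy_def
    using conj_homotopy_in_simp[OF eta] conj_homotopy_face[OF eta] conj_homotopy_degen[OF eta]
      conj_homotopy_0 conj_homotopy_top simplexD unfolding conj_aut_def by auto
  then show ?thesis
    unfolding Inn_def inner_aut_def using simplicial_aut_conj_aut[OF eta] by (auto simp: conj_aut_def)
qed

section \<open>Inner automorphisms are conjugations\<close>

text \<open>The element \<open>\<eta>\<close> with \<open>\<alpha> = c\<^sub>\<eta>\<close> is read off a homotopy from \<open>\<alpha>\<close> to the identity as
  the image of the degenerate edge \<open>[\<one>]\<close> over the non-degenerate edge of \<open>\<Delta>[1]\<close>.\<close>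

definition homotopy_letter :: "(nat \<Rightarrow> 'a list \<Rightarrow> nat \<Rightarrow> 'a list) \<Rightarrow> 'a" where
  "homotopy_letter F = hd (F (Suc 0) [e] 1)"

lemma homotopy_on_degen:
  assumes F: "simplicial_homotopy M F \<alpha> (\<lambda>n w. w)" and w: "w \<in> simp M n" and i: "i \<le> n"
  shows "F (Suc n) (degen M n i w) (Suc i) = omega (letter_map \<alpha>) (homotopy_letter F) w i"
proof (rule nth_equalityI)
  have lw: "length w = n" using simplexD[OF w] by auto
  have ds: "degen M n i w \<in> simp M (Suc n)" using degen_in_simp[OF w i] .
  have k: "Suc i \<le> Suc (Suc n)" using i by simp
  have lF: "length (F (Suc n) (degen M n i w) (Suc i)) = Suc n"
    using simplexD[OF homotopy_simp[OF F ds k]] by simp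
  show "length (F (Suc n) (degen M n i w) (Suc i)) = length (omega (letter_map \<alpha>) (homotopy_letter F) w i)"
    using lF lw i by (simp add: omega_def)
  fix j assume "j < length (F (Suc n) (degen M n i w) (Suc i))"
  then have j: "j < Suc n" using lF by simp
  have ends: "F (Suc 0) [x] 2 = \<alpha> (Suc 0) [x]" "F (Suc 0) [x] 0 = [x]" if "x \<in> C" for x
    using homotopy_ends[OF F singleton_in_simp_1[OF that]] by (simp_all add: numeral_2_eq_2)
  have "F (Suc n) (degen M n i w) (Suc i) ! j = hd (F (Suc 0) [degen M n i w ! j] (edge_restrict (Suc i) j))"
    using homotopy_spine[OF F ds k j] .
  then show "F (Suc n) (degen M n i w) (Suc i) ! j = omega (letter_map \<alpha>) (homotopy_letter F) w i ! j"
    using nth_degen[OF lw i j] nth_omega[of i w j] i j lw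
      ends[OF simplex_nth_in_carrier[OF w, of j]] ends[OF simplex_nth_in_carrier[OF w, of "j - 1"]]
    by (auto simp: edge_restrict_def letter_map_def homotopy_letter_def)
qed

lemma prod_omega_homotopy_Suc:
  assumes F: "simplicial_homotopy M F \<alpha> (\<lambda>n w. w)" and w: "w \<in> simp M n" and i: "i < n"
  shows "P (omega (letter_map \<alpha>) (homotopy_letter F) w i) =
    P (omega (letter_map \<alpha>) (homotopy_letter F) w (Suc i))"
proof -
  \<comment> \<open>Both degenerate simplices \<open>s\<^sub>i w\<close> and \<open>s\<^sub>i\<^sub>+\<^sub>1 w\<close> have inner face \<open>d\<^sub>i\<^sub>+\<^sub>1\<close> equal to \<open>w\<close>.\<close>
  have "P (F (Suc n) (degen M n j w) (Suc j)) = P (F n w (Suc i))" if j: "j = i \<or> j = Suc i" for j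
  proof -
    have d: "degen M n j w \<in> simp M (Suc n)" using degen_in_simp[OF w] i j by auto
    have k: "Suc j \<le> Suc (Suc n)" using i j by auto
    have "face M (Suc n) (Suc i) (F (Suc n) (degen M n j w) (Suc j)) = F n w (Suc i)"
      using homotopy_face[OF F d k, where i = "Suc i"] face_degen_id[OF w, of j "Suc i"] i j
      by (auto simp: d1_face_def)
    then show ?thesis using prod_face_inner[OF homotopy_simp[OF F d k], of "Suc i"] i by simp
  qed
  then show ?thesis using homotopy_on_degen[OF F w] i by (metis Suc_leI less_imp_le)
qed

lemma inner_aut_is_conj:
  assumes \<alpha>: "simplicial_aut M \<alpha>" and F: "simplicial_homotopy M F \<alpha> (\<lambda>n w. w)"
  shows "homotopy_letter F \<in> pg_N M" and "\<forall>x\<in>C. pg_conj M (homotopy_letter F) x = letter_map \<alpha> x"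
proof -
  let ?\<eta> = "homotopy_letter F"
  have "F (Suc 0) [e] 1 \<in> simp M (Suc 0)" using homotopy_simp[OF F singleton_in_simp_1[OF one_in_carrier]] by simp
  then have eta: "?\<eta> \<in> C" using simp_1D unfolding homotopy_letter_def by blast
  have prod: "P (omega (letter_map \<alpha>) ?\<eta> w i) = P (?\<eta> # w)" if w: "w \<in> simp M n" and "i \<le> n" for w n i
    using \<open>i \<le> n\<close>
  proof (induction i)
    case (Suc i)
    then show ?case using prod_omega_homotopy_Suc[OF F w, of i] by simp
  qed simp
  have "omega (letter_map \<alpha>) ?\<eta> w i \<in> D \<and> P (omega (letter_map \<alpha>) ?\<eta> w i) = P (?\<eta> # w)"
    if w: "w \<in> D" and i: "i \<le> length w" for w i
  proof -
    have ws: "w \<in> simp M (length w)" using w by (rule simplexI) simp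
    have "omega (letter_map \<alpha>) ?\<eta> w i \<in> simp M (Suc (length w))"
      using homotopy_on_degen[OF F ws i] homotopy_simp[OF F degen_in_simp[OF ws i], of "Suc i"] i by simp
    then show ?thesis using simplexD prod[OF ws i] by simp
  qed
  then show "?\<eta> \<in> pg_N M" "\<forall>x\<in>C. pg_conj M ?\<eta> x = letter_map \<alpha> x"
    using N_memI[OF \<alpha> eta] by simp_all
qed

lemma N_group_simps [simp]:
  "carrier (N_group M) = pg_N M" "x \<otimes>\<^bsub>N_group M\<^esub> y = P [x, y]" "\<one>\<^bsub>N_group M\<^esub> = e"
  by (simp_all add: N_group_def)

lemma group_N_group: "group (N_group M)"
proof (rule groupI)
  fix x y z assume "x \<in> carrier (N_group M)" "y \<in> carrier (N_group M)" "z \<in> carrier (N_group M)"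
  then have N: "x \<in> pg_N M" "y \<in> pg_N M" "z \<in> pg_N M" by simp_all
  then show "x \<otimes>\<^bsub>N_group M\<^esub> y \<in> carrier (N_group M)"
    using mult_in_N(1) by simp
  show "x \<otimes>\<^bsub>N_group M\<^esub> y \<otimes>\<^bsub>N_group M\<^esub> z = x \<otimes>\<^bsub>N_group M\<^esub> (y \<otimes>\<^bsub>N_group M\<^esub> z)"
    using prod_assoc3[OF N_words_in_dom[of "[x, y, z]"]] N by simp
next
  show "\<one>\<^bsub>N_group M\<^esub> \<in> carrier (N_group M)" using one_in_N by simp
next
  fix x assume "x \<in> carrier (N_group M)"
  then have x: "x \<in> pg_N M" by simp
  show "\<one>\<^bsub>N_group M\<^esub> \<otimes>\<^bsub>N_group M\<^esub> x = x"
    using one_left[OF N_in_carrier[OF x]] by simp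
  show "\<exists>y\<in>carrier (N_group M). y \<otimes>\<^bsub>N_group M\<^esub> x = \<one>\<^bsub>N_group M\<^esub>"
    using inv_in_N(1)[OF x] inv_left[OF N_in_carrier[OF x]] by auto
qed

lemma conj_aut_eqI:
  assumes \<alpha>: "\<alpha> \<in> carrier (Inn M)" and letter: "\<forall>x\<in>C. letter_map \<alpha> x = pg_conj M \<eta> x"
  shows "\<alpha> = conj_aut \<eta>"
proof (intro ext)
  fix n w
  have "inner_aut M \<alpha>" and off: "w \<notin> simp M n \<Longrightarrow> \<alpha> n w = undefined"
    using \<alpha> unfolding Inn_def by auto
  then have map: "simplicial_map M \<alpha>" unfolding inner_aut_def simplicial_aut_def by blast
  show "\<alpha> n w = conj_aut \<eta> n w"
  proof (cases "w \<in> simp M n")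
    case True
    then have "\<alpha> n w = map (letter_map \<alpha>) w" by (rule simplicial_map_spine[OF map])
    also have "\<dots> = map (pg_conj M \<eta>) w" using map_eq_on_dom letter simplexD[OF True] by blast
    finally show ?thesis using True by (simp add: conj_aut_def)
  next
    case False
    then show ?thesis using off by (simp add: conj_aut_def)
  qed
qed

lemma conj_aut_mult:
  assumes eta: "\<eta> \<in> pg_N M" and theta: "\<theta> \<in> pg_N M"
  shows "conj_aut (P [\<eta>, \<theta>]) = conj_aut \<eta> \<otimes>\<^bsub>Inn M\<^esub> conj_aut \<theta>"
proof (intro ext)
  fix n w
  show "conj_aut (P [\<eta>, \<theta>]) n w = (conj_aut \<eta> \<otimes>\<^bsub>Inn M\<^esub> conj_aut \<theta>) n w"
  proof (cases "w \<in> simp M n")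
    case True
    have "map (pg_conj M (P [\<eta>, \<theta>])) w = map (\<lambda>x. pg_conj M \<eta> (pg_conj M \<theta> x)) w"
      using mult_in_N(2)[OF eta theta] simplexD[OF True] by (intro map_eq_on_dom) auto
    then show ?thesis using True map_conj_in_simp[OF theta True] by (simp add: Inn_def conj_aut_def)
  next
    case False
    then show ?thesis by (simp add: Inn_def conj_aut_def)
  qed
qed

lemma conj_aut_hom: "conj_aut \<in> hom (N_group M) (Inn M)"
  unfolding hom_def using conj_aut_in_Inn conj_aut_mult by simp

lemma conj_aut_surj: "conj_aut ` pg_N M = carrier (Inn M)"
proof (intro equalityI subsetI)
  fix \<alpha> assume \<alpha>: "\<alpha> \<in> carrier (Inn M)"
  then obtain F where "simplicial_aut M \<alpha>" "simplicial_homotopy M F \<alpha> (\<lambda>n w. w)"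
    unfolding Inn_def inner_aut_def by auto
  then have "homotopy_letter F \<in> pg_N M" "\<alpha> = conj_aut (homotopy_letter F)"
    using inner_aut_is_conj conj_aut_eqI[OF \<alpha>] by auto
  then show "\<alpha> \<in> conj_aut ` pg_N M" by blast
qed (use conj_aut_in_Inn in blast)

lemma conj_aut_eq_one:
  assumes "\<forall>x\<in>C. pg_conj M \<eta> x = x"
  shows "conj_aut \<eta> = \<one>\<^bsub>Inn M\<^esub>"
proof (intro ext)
  fix n w
  have "w \<in> simp M n \<Longrightarrow> map (pg_conj M \<eta>) w = map id w"
    using assms simplexD by (intro map_eq_on_dom) auto
  then show "conj_aut \<eta> n w = \<one>\<^bsub>Inn M\<^esub> n w" by (simp add: Inn_def conj_aut_def)
qed

lemma group_Inn: "group (Inn M)"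
proof -
  have "Inn M = Inn M \<lparr>carrier := conj_aut ` carrier (N_group M), one := conj_aut \<one>\<^bsub>N_group M\<^esub>\<rparr>"
    using conj_aut_surj conj_aut_eq_one[OF conj_by_one] by simp
  then show ?thesis using group.hom_imp_img_group[OF group_N_group conj_aut_hom] by simp
qed

lemma kernel_conj_aut: "kernel (N_group M) (Inn M) conj_aut = pg_Z M"
proof -
  have "conj_aut \<eta> = \<one>\<^bsub>Inn M\<^esub> \<longleftrightarrow> (\<forall>x\<in>C. pg_conj M \<eta> x = x)" for \<eta>
  proof
    assume "conj_aut \<eta> = \<one>\<^bsub>Inn M\<^esub>"
    then have "letter_map (conj_aut \<eta>) x = x" if "x \<in> C" for x
      using singleton_in_simp_1[OF that] unfolding letter_map_def Inn_def by simp
    then show "\<forall>x\<in>C. pg_conj M \<eta> x = x" using letter_map_conj_aut by simp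
  qed (rule conj_aut_eq_one)
  then show ?thesis unfolding kernel_def pg_Z_def by simp
qed

theorem Inn_iso_N_Mod_Z: "Inn M \<cong> N_group M Mod pg_Z M"
proof -
  interpret group_hom "N_group M" "Inn M" conj_aut
    using group_N_group group_Inn conj_aut_hom by (simp add: group_hom_def group_hom_axioms_def)
  have "conj_aut ` carrier (N_group M) = carrier (Inn M)" using conj_aut_surj by simp
  then have iso: "N_group M Mod pg_Z M \<cong> Inn M" using FactGroup_iso kernel_conj_aut by simp
  have "pg_Z M \<lhd> N_group M" using normal_kernel kernel_conj_aut by simp
  then show ?thesis using group.iso_sym[OF normal.factorgroup_is_group iso] by blast
qed

end

theorem lemma5p7:
  fixes M :: "'a partial_group"
  assumes "partial_group M"
  shows "pg_subgroup M (pg_N M) \<and>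
         (pg_subgroup M (pg_Z M) \<and>
          (\<forall>x\<in>pg_Z M. \<forall>y\<in>pg_Z M. pg_prod M [x, y] = pg_prod M [y, x])) \<and>
         Inn M \<cong> (N_group M Mod pg_Z M)"
proof -
  interpret pgroup M using assms by (rule pgroup.intro)
  show ?thesis using N_subgroup Z_subgroup Z_commute Inn_iso_N_Mod_Z by blast
qed

end
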